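(* Consider a linear binary non-uniform $C^0$-convergent subdivision scheme with fixed mask size, $n_0$ initial control points forming $\bar p^0\in\mathbb{R}^{n_0\times m}$, and location-dependent $n_0\times n_0$ matrices $S^{[k]}_{\eta_k}$, $\eta_k\in\{1,2\}^k$, as described in the context. Define the binary tree of maps $f_r(A)=AS^{[1]}_r\bar p^0$ ($r=1,2$, $A\in\mathbb{R}^{n_0}$ a row vector, values in $\mathbb{R}^m$) and, for $k>1$, $f_{\eta_k}(A)=AS^{[k]}_{\eta_k}$ on $\mathbb{R}^{n_0}$. Then for every $\eta\in\{1,2\}^{\mathbb{N}}$ and every $A\in K^{n_0-1}$ the limit $$\gamma(\eta)=\lim_{k\to\infty}f_{\tau_1\eta}\circ f_{\tau_2\eta}\circ\cdots\circ f_{\tau_k\eta}(A)=\lim_{k\to\infty}AS^{[k]}_{\tau_k\eta}\cdots S^{[2]}_{\tau_2\eta}S^{[1]}_{\tau_1\eta}\bar p^0$$ exists and is independent of $A$, and the attractor $U_{TM}=\bigcup_{\eta}\gamma(\eta)$ equals the limit curve in $\mathbb{R}^m$ of the non-uniform scheme started from $\bar p^0$.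
   Context: $\tau_\ell\eta$ is the truncation of $\eta$ to its first $\ell$ symbols. $K^{n_0-1}=\{(x_1,\ldots,x_{n_0})\in\mathbb{R}^{n_0}:\sum_ix_i=1\}$. The matrices are defined recursively: $S^{[1]}_1$ (resp. $S^{[1]}_2$) generates from $\bar p^0$ the first (resp. last) $n_0$ points at level 1; with $\bar p_{\eta_k}=S^{[k]}_{i_1\ldots i_k}\cdots S^{[2]}_{i_1i_2}S^{[1]}_{i_1}\bar p^0$ the $n_0$ points at level $k$ attached to location $\eta_k=(i_1\ldots i_k)$, the matrices $S^{[k+1]}_{\eta_k1}$ and $S^{[k+1]}_{\eta_k2}$ generate the first and last $n_0$ points obtained by applying the (location-dependent) refinement rules to $\bar p_{\eta_k}$. $C^0$-convergence means that for each $\eta$ the matrices $\bar p_{\tau_k\eta}$ converge to an $n_0\times m$ matrix with all rows equal to a point $q_\eta$, and the limit curve is $\bigcup_\eta q_\eta$. *)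

theory Defs
  imports "HOL-Analysis.Analysis"
begin

text \<open>Infinite binary addresses eta in {1,2}^N (0-indexed sequences).\<close>
definition binseqs :: "(nat \<Rightarrow> nat) set" where
  "binseqs = {\<eta>. \<forall>i. \<eta> i \<in> {1, 2}}"

definition trunc :: "nat \<Rightarrow> (nat \<Rightarrow> nat) \<Rightarrow> nat list" where
  "trunc k \<eta> = map \<eta> [0..<k]"

text \<open>The control points pbar at level k attached to location tau_k eta:
  S^[k]_{tau_k eta} ... S^[1]_{tau_1 eta} pbar^0.  The matrix S^[k]_{eta_k} is S eta_k
  (the level k is the length of the location). Rows indexed by 'n (n_0 points),
  columns by 'm (coordinates in R^m).\<close>
fun pts :: "(nat list \<Rightarrow> real^'n^'n) \<Rightarrow> real^'m^'n \<Rightarrow> (nat \<Rightarrow> nat) \<Rightarrow> nat \<Rightarrow> real^'m^'n" where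
  "pts S p0 \<eta> 0 = p0"
| "pts S p0 \<eta> (Suc k) = S (trunc (Suc k) \<eta>) ** pts S p0 \<eta> k"

definition C0_convergent :: "(nat list \<Rightarrow> real^'n^'n) \<Rightarrow> real^'m^'n \<Rightarrow> bool" where
  "C0_convergent S p0 \<longleftrightarrow>
     (\<forall>\<eta>\<in>binseqs. \<exists>q::real^'m. (\<lambda>k. pts S p0 \<eta> k) \<longlonglongrightarrow> (\<chi> i. q))"

definition limit_curve :: "(nat list \<Rightarrow> real^'n^'n) \<Rightarrow> real^'m^'n \<Rightarrow> (real^'m) set" where
  "limit_curve S p0 =
     {q. \<exists>\<eta>\<in>binseqs. (\<lambda>k. pts S p0 \<eta> k) \<longlonglongrightarrow> (\<chi> i. q)}"

definition Kplane :: "(real^'n) set" where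
  "Kplane = {A. (\<Sum>i\<in>UNIV. A $ i) = 1}"

text \<open>The composition f_{tau_1 eta} o ... o f_{tau_k eta} (A), where
  f_r(A) = A S^[1]_r pbar^0 and f_{eta_k}(A) = A S^[k]_{eta_k} for k > 1.\<close>
definition fcomp :: "(nat list \<Rightarrow> real^'n^'n) \<Rightarrow> real^'m^'n \<Rightarrow> (nat \<Rightarrow> nat) \<Rightarrow> nat \<Rightarrow> real^'n \<Rightarrow> real^'m" where
  "fcomp S p0 \<eta> k A = A v* pts S p0 \<eta> k"

definition gamma :: "(nat list \<Rightarrow> real^'n^'n) \<Rightarrow> real^'m^'n \<Rightarrow> (nat \<Rightarrow> nat) \<Rightarrow> real^'n \<Rightarrow> real^'m" where
  "gamma S p0 \<eta> A = lim (\<lambda>k. fcomp S p0 \<eta> k A)"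

definition attractor :: "(nat list \<Rightarrow> real^'n^'n) \<Rightarrow> real^'m^'n \<Rightarrow> (real^'m) set" where
  "attractor S p0 = {gamma S p0 \<eta> A | \<eta> A. \<eta> \<in> binseqs \<and> A \<in> Kplane}"

end

theory Submission
  imports Defs
begin

text \<open>Multiplying on the left by a row vector A is continuous, so A times the level-k points
  tends to A times the limit matrix, whose rows all equal q_eta. For A in K^{n_0-1} the weights
  of A sum to 1, hence that product is q_eta itself, whatever A is.\<close>

lemma tendsto_vector_matrix_mult:
  fixes X :: "nat \<Rightarrow> 'a::real_normed_field^'m^'n"
  assumes "X \<longlonglongrightarrow> L"
  shows "(\<lambda>k. A v* X k) \<longlonglongrightarrow> A v* L"
  unfolding vector_matrix_mult_def
  by (rule vec_tendstoI, simp) (intro tendsto_sum tendsto_mult tendsto_const tendsto_vec_nth assms)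

lemma Kplane_vector_matrix_mult_const_rows:
  fixes A :: "real^'n"
  assumes "A \<in> Kplane"
  shows "A v* (\<chi> i. q) = q"
  using assms unfolding Kplane_def vector_matrix_mult_def
  by (simp add: vec_eq_iff sum_distrib_right[symmetric])

lemma Kplane_nonempty: "\<exists>A::real^'n. A \<in> Kplane"
proof -
  fix i0 :: 'n
  have "(\<Sum>i\<in>UNIV. ((\<chi> j. if j = i0 then 1 else 0) :: real^'n) $ i) = 1"
    by simp
  then show ?thesis
    unfolding Kplane_def by blast
qed

lemma fcomp_tendsto_limit_point:
  fixes S :: "nat list \<Rightarrow> real^'n^'n" and p0 :: "real^'m^'n"
  assumes "(\<lambda>k. pts S p0 \<eta> k) \<longlonglongrightarrow> (\<chi> i. q)" and "A \<in> Kplane"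
  shows "(\<lambda>k. fcomp S p0 \<eta> k A) \<longlonglongrightarrow> q"
  using tendsto_vector_matrix_mult[OF assms(1), of A]
  unfolding fcomp_def Kplane_vector_matrix_mult_const_rows[OF assms(2)] .

lemma gamma_eq_limit_point:
  fixes S :: "nat list \<Rightarrow> real^'n^'n" and p0 :: "real^'m^'n"
  assumes "(\<lambda>k. pts S p0 \<eta> k) \<longlonglongrightarrow> (\<chi> i. q)" and "A \<in> Kplane"
  shows "gamma S p0 \<eta> A = q"
  unfolding gamma_def using fcomp_tendsto_limit_point[OF assms] by (rule limI)

lemma attractor_eq_limit_curve:
  fixes S :: "nat list \<Rightarrow> real^'n^'n" and p0 :: "real^'m^'n"
  assumes "C0_convergent S p0"
  shows "attractor S p0 = limit_curve S p0"
proof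
  show "attractor S p0 \<subseteq> limit_curve S p0"
  proof
    fix x assume "x \<in> attractor S p0"
    then obtain \<eta> and A :: "real^'n" where x: "x = gamma S p0 \<eta> A" and \<eta>: "\<eta> \<in> binseqs" and A: "A \<in> Kplane"
      unfolding attractor_def by blast
    obtain q where q: "(\<lambda>k. pts S p0 \<eta> k) \<longlonglongrightarrow> (\<chi> i. q)"
      using assms \<eta> unfolding C0_convergent_def by blast
    have "x = q"
      using gamma_eq_limit_point[OF q A] x by simp
    with q \<eta> show "x \<in> limit_curve S p0"
      unfolding limit_curve_def by blast
  qed
next
  show "limit_curve S p0 \<subseteq> attractor S p0"
  proof
    fix x assume "x \<in> limit_curve S p0"
    then obtain \<eta> where \<eta>: "\<eta> \<in> binseqs" and q: "(\<lambda>k. pts S p0 \<eta> k) \<longlonglongrightarrow> (\<chi> i. x)"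
      unfolding limit_curve_def by blast
    obtain A :: "real^'n" where A: "A \<in> Kplane"
      using Kplane_nonempty by blast
    have "gamma S p0 \<eta> A = x"
      using gamma_eq_limit_point[OF q A] .
    with \<eta> A show "x \<in> attractor S p0"
      unfolding attractor_def by blast
  qed
qed

theorem mainTheorem12:
  fixes S :: "nat list \<Rightarrow> real^'n^'n" and p0 :: "real^'m^'n"
  assumes "C0_convergent S p0"
  shows "(\<forall>\<eta>\<in>binseqs. \<forall>A\<in>Kplane.
            convergent (\<lambda>k. fcomp S p0 \<eta> k A) \<and>
            (\<forall>B\<in>Kplane. gamma S p0 \<eta> A = gamma S p0 \<eta> B))
         \<and> attractor S p0 = limit_curve S p0"
proof (intro conjI ballI)
  fix \<eta> and A B :: "real^'n"
  assume \<eta>: "\<eta> \<in> binseqs" and A: "A \<in> Kplane"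
  obtain q :: "real^'m" where q: "(\<lambda>k. pts S p0 \<eta> k) \<longlonglongrightarrow> (\<chi> i. q)"
    using assms \<eta> unfolding C0_convergent_def by blast
  show "convergent (\<lambda>k. fcomp S p0 \<eta> k A)"
    using fcomp_tendsto_limit_point[OF q A] unfolding convergent_def by blast
  assume B: "B \<in> Kplane"
  show "gamma S p0 \<eta> A = gamma S p0 \<eta> B"
    using gamma_eq_limit_point[OF q A] gamma_eq_limit_point[OF q B] by simp
next
  show "attractor S p0 = limit_curve S p0"
    using attractor_eq_limit_curve[OF assms] .
qed

end
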